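(* Let $S=\{\rho_1=0<\rho_2<\cdots\}$ be a numerical semigroup. For a positive integer $d$ let $R_d=\{i\ge 1:\ \#A[\rho_i]<d\}$. Then the following are equivalent: (a) $S$ is an Arf semigroup; (b) for every positive integer $d$, $\#R_d=\rho_{\lceil d/2\rceil}+\lfloor d/2\rfloor$.
   Context: A numerical semigroup is a submonoid $S$ of $(\mathbb{N}_0,+)$ with finite complement, with elements listed increasingly $\rho_1=0<\rho_2<\cdots$. $S$ is an Arf semigroup if for all positive integers $i\ge j\ge k$ one has $\rho_i+\rho_j-\rho_k\in S$. For $\rho\in S$, $A[\rho]=\{p\in S:\ \rho-p\in S\}$. *)

theory Defs
  imports Main "HOL-Library.Infinite_Set"
begin

definition numerical_semigroup :: "nat set \<Rightarrow> bool" where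
  "numerical_semigroup S \<longleftrightarrow>
     0 \<in> S \<and> (\<forall>a\<in>S. \<forall>b\<in>S. a + b \<in> S) \<and> finite (UNIV - S)"

text \<open>rho S i is the i-th element of S listed increasingly, 1-indexed (rho S 1 = 0).\<close>
definition rho :: "nat set \<Rightarrow> nat \<Rightarrow> nat" where
  "rho S i = enumerate S (i - 1)"

definition arf :: "nat set \<Rightarrow> bool" where
  "arf S \<longleftrightarrow> (\<forall>i j k. 1 \<le> k \<and> k \<le> j \<and> j \<le> i \<longrightarrow>
      rho S i + rho S j - rho S k \<in> S)"

text \<open>A[r] = {p in S. r - p in S} (with r - p required to be a nonnegative integer).\<close>
definition Aset :: "nat set \<Rightarrow> nat \<Rightarrow> nat set" where
  "Aset S r = {p \<in> S. p \<le> r \<and> r - p \<in> S}"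

definition Rset :: "nat set \<Rightarrow> nat \<Rightarrow> nat set" where
  "Rset S d = {i. 1 \<le> i \<and> card (Aset S (rho S i)) < d}"

end

theory Submission
  imports Defs
begin

text \<open>
  Arf semigroups are exactly the numerical semigroups with 2x - y \<in> S whenever y \<le> x are in S.
  Pairing p with s - p, the set A[s] consists of the pairs whose smaller member lies in the lower
  half L(s) = {p \<in> S. 2p < s, s - p \<in> S}, plus possibly the midpoint s/2, so
  #A[s] = 2 #L(s) + [s/2 \<in> S].

  For an Arf semigroup every L(s) is an initial segment of S, and L(2y) = {p \<in> S. p < y}.
  Hence, with k = \<lceil>d/2\<rceil> and c = \<rho>_k, one has #A[s] \<ge> d exactly when s - c \<in> S and
  s \<ge> 2c (strictly if d is even); that is, {s. #A[s] \<ge> d} is the translate by c of S minus its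
  first \<lfloor>d/2\<rfloor> elements, and its complement in S has c + \<lfloor>d/2\<rfloor> elements.

  Conversely, the formula says that for each m exactly one s \<in> S has #A[s] = 2m + 1. Since
  #A[2\<rho>_k] = 2 #L(2\<rho>_k) + 1 and #L(2\<rho>_k) \<le> k - 1, the map k \<mapsto> #L(2\<rho>_k) is injective
  and bounded, which forces #L(2\<rho>_k) = k - 1, i.e. L(2x) = {p \<in> S. p < x} for every x \<in> S.
\<close>

lemma card_Compl_split:
  assumes "A \<subseteq> B" "finite (- A)"
  shows "card (- A) = card (- B) + card (B - A)"
proof -
  have "- A = - B \<union> (B - A)" "- B \<inter> (B - A) = {}"
    using assms(1) by auto
  moreover have "finite (- B)" "finite (B - A)"
    using assms by (auto intro: finite_subset)
  ultimately show ?thesis by (simp add: card_Un_disjoint)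
qed

lemma mem_image_add_iff: "n \<in> (+) c ` W \<longleftrightarrow> c \<le> n \<and> n - c \<in> (W :: nat set)"
  by (auto simp: image_iff intro: bexI[of _ "n - c"])

lemma Compl_image_add:
  fixes V :: "nat set"
  shows "- ((+) c ` V) = {..<c} \<union> (+) c ` (- V)"
  by (auto simp: mem_image_add_iff)

lemma card_Compl_image_add:
  fixes V :: "nat set"
  assumes "finite (- V)"
  shows "card (- ((+) c ` V)) = c + card (- V)"
  using assms unfolding Compl_image_add
  by (subst card_Un_disjoint) (auto simp: card_image)

lemma card_diff_image_add:
  fixes S V :: "nat set"
  assumes "finite (- S)" "V \<subseteq> S" "(+) c ` V \<subseteq> S" "finite (S - V)"
  shows "card (S - (+) c ` V) = c + card (S - V)"
proof -
  have "finite (- V)"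
    using assms(1,4) by (intro finite_subset[of "- V" "- S \<union> (S - V)"]) auto
  then have "finite (- ((+) c ` V))"
    unfolding Compl_image_add by simp
  then have "card (- ((+) c ` V)) = card (- S) + card (S - (+) c ` V)"
    by (rule card_Compl_split[OF assms(3)])
  moreover have "card (- V) = card (- S) + card (S - V)"
    using assms(2) \<open>finite (- V)\<close> by (rule card_Compl_split)
  ultimately show ?thesis
    using card_Compl_image_add[OF \<open>finite (- V)\<close>, of c] by simp
qed

lemma inj_le_self_imp_eq:
  fixes f :: "nat \<Rightarrow> nat"
  assumes "inj f" "\<And>n. f n \<le> n"
  shows "f n = n"
proof (induction n rule: less_induct)
  case (less n)
  show ?case
  proof (rule ccontr)
    assume "f n \<noteq> n"
    then have "f n < n" using assms(2)[of n] by simp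
    then have "f (f n) = f n" by (rule less.IH)
    then show False using \<open>f n \<noteq> n\<close> inj_eq[OF assms(1)] by blast
  qed
qed

definition reflection_closed :: "nat set \<Rightarrow> bool" where
  "reflection_closed T \<longleftrightarrow> (\<forall>x\<in>T. \<forall>y\<in>T. y \<le> x \<longrightarrow> 2 * x - y \<in> T)"

lemma reflection_closed_translate:
  assumes "reflection_closed T"
  shows "reflection_closed {w. z + w \<in> T}"
  unfolding reflection_closed_def
proof (intro ballI impI)
  fix x y assume "x \<in> {w. z + w \<in> T}" "y \<in> {w. z + w \<in> T}" "y \<le> x"
  then have "2 * (z + x) - (z + y) \<in> T"
    using assms add_left_mono[OF \<open>y \<le> x\<close>, of z] unfolding reflection_closed_def by blast
  moreover have "2 * (z + x) - (z + y) = z + (2 * x - y)"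
    using \<open>y \<le> x\<close> by simp
  ultimately show "2 * x - y \<in> {w. z + w \<in> T}" by simp
qed

lemma reflection_closed_add:
  assumes "0 \<in> T" "reflection_closed T" "a \<in> T" "b \<in> T"
  shows "a + b \<in> T"
  using assms
proof (induction "a + b" arbitrary: T a b rule: less_induct)
  case less
  \<comment> \<open>Euclidean descent: in the translate by the smaller summand y,
    the pair (x - y, y) has a smaller sum.\<close>
  have "x + y \<in> T" if "x \<in> T" "y \<in> T" "y \<le> x" "x + y = a + b" for x y
  proof (cases "y = 0")
    case False
    let ?T = "{w. y + w \<in> T}"
    have "(x - y) + y < a + b"
      using False that(3,4) by simp
    then have "(x - y) + y \<in> ?T"
    proof (rule less.hyps)
      show "0 \<in> ?T" "x - y \<in> ?T"
        using that by simp_all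
      show "reflection_closed ?T"
        using less.prems(2) by (rule reflection_closed_translate)
      have "2 * y - 0 \<in> T"
        using less.prems(1,2) \<open>y \<in> T\<close> unfolding reflection_closed_def by blast
      then show "y \<in> ?T"
        by (simp add: mult_2)
    qed
    then show ?thesis
      using that(3) by (simp add: add.commute)
  qed (use that in simp)
  then show ?case
    using less.prems by (cases "b \<le> a") (auto simp: add.commute)
qed

lemma reflection_closed_add_diff:
  assumes "reflection_closed T" "x \<in> T" "y \<in> T" "z \<in> T" "z \<le> x" "z \<le> y"
  shows "x + y - z \<in> T"
proof -
  let ?T = "{w. z + w \<in> T}"
  have "(x - z) + (y - z) \<in> ?T"
    using assms by (intro reflection_closed_add) (simp_all add: reflection_closed_translate)
  then show ?thesis
    using assms(5,6) by (simp add: algebra_simps)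
qed

lemma numerical_semigroup_add: "numerical_semigroup S \<Longrightarrow> a \<in> S \<Longrightarrow> b \<in> S \<Longrightarrow> a + b \<in> S"
  unfolding numerical_semigroup_def by blast

lemma numerical_semigroup_finite_Compl: "numerical_semigroup S \<Longrightarrow> finite (- S)"
  unfolding numerical_semigroup_def by (simp add: Compl_eq_Diff_UNIV)

lemma numerical_semigroup_infinite: "numerical_semigroup S \<Longrightarrow> infinite S"
  using numerical_semigroup_finite_Compl finite_compl by blast

lemma bij_betw_rho: "infinite S \<Longrightarrow> bij_betw (rho S) {1..} S"
proof -
  assume "infinite S"
  have "bij_betw (\<lambda>i. i - 1) {1::nat..} UNIV"
    by (rule bij_betw_byWitness[where f' = Suc]) auto
  with \<open>infinite S\<close> show ?thesis
    using bij_betw_trans bij_enumerate unfolding rho_def comp_def by blast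
qed

lemma rho_in: "infinite S \<Longrightarrow> rho S i \<in> S"
  unfolding rho_def by (rule enumerate_in_set)

lemma rho_surj:
  assumes "infinite S" "s \<in> S"
  obtains i where "1 \<le> i" "rho S i = s"
  using bij_betw_imp_surj_on[OF bij_betw_rho[OF assms(1)]] assms(2) by force

lemma rho_less_iff: "infinite S \<Longrightarrow> 1 \<le> i \<Longrightarrow> 1 \<le> j \<Longrightarrow> rho S i < rho S j \<longleftrightarrow> i < j"
  unfolding rho_def by auto

lemma rho_le_iff: "infinite S \<Longrightarrow> 1 \<le> i \<Longrightarrow> 1 \<le> j \<Longrightarrow> rho S i \<le> rho S j \<longleftrightarrow> i \<le> j"
  unfolding rho_def by auto

lemma rho_inject: "infinite S \<Longrightarrow> 1 \<le> i \<Longrightarrow> 1 \<le> j \<Longrightarrow> rho S i = rho S j \<longleftrightarrow> i = j"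
  by (metis order.eq_iff rho_le_iff)

lemma card_less_rho:
  assumes "infinite S" "1 \<le> k"
  shows "card {p \<in> S. p < rho S k} = k - 1"
proof -
  have "{p \<in> S. p < rho S k} = rho S ` {1..<k}"
    using assms by (auto simp: rho_in rho_less_iff elim!: rho_surj[OF assms(1)])
  moreover have "inj_on (rho S) {1..<k}"
    using assms(1) by (auto simp: inj_on_def rho_inject)
  ultimately show ?thesis by (simp add: card_image)
qed

lemma card_Rset:
  assumes "infinite S"
  shows "card (Rset S d) = card {s \<in> S. card (Aset S s) < d}"
proof -
  have "Rset S d \<subseteq> {1..}" by (auto simp: Rset_def)
  then have "bij_betw (rho S) (Rset S d) (rho S ` Rset S d)"
    using bij_betw_subset[OF bij_betw_rho[OF assms]] by blast
  moreover have "rho S ` Rset S d = {s \<in> S. card (Aset S s) < d}"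
    using assms by (auto simp: Rset_def rho_in elim!: rho_surj[OF assms])
  ultimately show ?thesis by (metis bij_betw_same_card)
qed

lemma arf_iff:
  assumes "infinite S"
  shows "arf S \<longleftrightarrow> (\<forall>x\<in>S. \<forall>y\<in>S. \<forall>z\<in>S. z \<le> y \<longrightarrow> y \<le> x \<longrightarrow> x + y - z \<in> S)"
  unfolding arf_def bij_betw_ball[OF bij_betw_rho[OF assms]]
  by (auto simp: rho_le_iff[OF assms] rho_in[OF assms])

lemma arf_iff_reflection_closed:
  assumes "infinite S"
  shows "arf S \<longleftrightarrow> reflection_closed S"
proof
  assume "arf S"
  then show "reflection_closed S"
    unfolding arf_iff[OF assms] reflection_closed_def mult_2 by blast
next
  assume "reflection_closed S"
  then show "arf S"
    unfolding arf_iff[OF assms] using reflection_closed_add_diff order.trans by blast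
qed

definition Aset_lower :: "nat set \<Rightarrow> nat \<Rightarrow> nat set" where
  "Aset_lower S s = {p \<in> S. 2 * p < s \<and> s - p \<in> S}"

lemma finite_Aset_lower: "finite (Aset_lower S s)"
  by (rule finite_subset[of _ "{..s}"]) (auto simp: Aset_lower_def)

lemma card_Aset: "card (Aset S s) = 2 * card (Aset_lower S s) + card {p \<in> S. 2 * p = s}"
proof -
  let ?L = "Aset_lower S s" and ?M = "{p \<in> S. 2 * p = s}"
  let ?U = "{p \<in> S. s < 2 * p \<and> p \<le> s \<and> s - p \<in> S}"
  have "?U \<subseteq> (\<lambda>p. s - p) ` ?L"
  proof
    fix p assume "p \<in> ?U"
    then have "s - p \<in> ?L" "p = s - (s - p)" by (auto simp: Aset_lower_def)
    then show "p \<in> (\<lambda>p. s - p) ` ?L" by blast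
  qed
  then have "Aset S s = (?L \<union> (\<lambda>p. s - p) ` ?L) \<union> ?M"
    by (fastforce simp: Aset_def Aset_lower_def)
  moreover have "?L \<inter> (\<lambda>p. s - p) ` ?L = {}" "(?L \<union> (\<lambda>p. s - p) ` ?L) \<inter> ?M = {}"
    by (auto simp: Aset_lower_def)
  moreover have "inj_on (\<lambda>p. s - p) ?L"
    by (auto simp: inj_on_def Aset_lower_def)
  moreover have "finite ?M"
    by (rule finite_subset[of _ "{s div 2}"]) auto
  ultimately show ?thesis
    by (simp add: card_Un_disjoint card_image finite_Aset_lower)
qed

lemma card_midpoint_le:
  fixes S :: "nat set"
  shows "card {p \<in> S. 2 * p = s} \<le> 1"
proof -
  have "{p \<in> S. 2 * p = s} \<subseteq> {s div 2}" by auto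
  then show ?thesis using card_mono[of "{s div 2}"] by simp
qed

lemma card_Aset_double:
  assumes "y \<in> S"
  shows "card (Aset S (2 * y)) = 2 * card (Aset_lower S (2 * y)) + 1"
proof -
  have "{p \<in> S. 2 * p = 2 * y} = {y}" using assms by auto
  then show ?thesis using card_Aset[of S "2 * y"] by simp
qed

lemma Aset_lower_double_subset: "Aset_lower S (2 * y) \<subseteq> {p \<in> S. p < y}"
  by (auto simp: Aset_lower_def)

lemma Aset_lower_double:
  assumes "reflection_closed S" "y \<in> S"
  shows "Aset_lower S (2 * y) = {p \<in> S. p < y}"
  using assms by (auto simp: Aset_lower_def reflection_closed_def)

lemma reflection_closed_if_Aset_lower_double:
  assumes "\<And>x. x \<in> S \<Longrightarrow> Aset_lower S (2 * x) = {p \<in> S. p < x}"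
  shows "reflection_closed S"
  unfolding reflection_closed_def
proof (intro ballI impI)
  fix x y assume "x \<in> S" "y \<in> S" "y \<le> x"
  show "2 * x - y \<in> S"
  proof (cases "y = x")
    case False
    then have "y \<in> Aset_lower S (2 * x)"
      using assms[OF \<open>x \<in> S\<close>] \<open>y \<in> S\<close> \<open>y \<le> x\<close> by simp
    then show ?thesis by (simp add: Aset_lower_def)
  qed (simp add: \<open>x \<in> S\<close>)
qed

lemma Aset_lower_downward_closed:
  assumes "reflection_closed S" "p \<in> Aset_lower S s" "q \<in> S" "q \<le> p"
  shows "q \<in> Aset_lower S s"
proof -
  have "(s - p) + p - q \<in> S"
    using assms by (intro reflection_closed_add_diff) (auto simp: Aset_lower_def)
  then show ?thesis
    using assms(2-4) by (auto simp: Aset_lower_def)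
qed

lemma card_ge_iff_rho_mem:
  assumes "infinite S" "finite L" "L \<subseteq> S"
    and "\<And>p q. p \<in> L \<Longrightarrow> q \<in> S \<Longrightarrow> q \<le> p \<Longrightarrow> q \<in> L"
    and "1 \<le> k"
  shows "k \<le> card L \<longleftrightarrow> rho S k \<in> L"
proof
  assume "k \<le> card L"
  show "rho S k \<in> L"
  proof (rule ccontr)
    assume "rho S k \<notin> L"
    have "L \<subseteq> {p \<in> S. p < rho S k}"
    proof
      fix p assume "p \<in> L"
      then have "\<not> rho S k \<le> p"
        using assms(4) rho_in[OF assms(1)] \<open>rho S k \<notin> L\<close> by blast
      then show "p \<in> {p \<in> S. p < rho S k}"
        using \<open>p \<in> L\<close> assms(3) by auto
    qed
    then have "card L \<le> k - 1"
      using card_mono[of "{p \<in> S. p < rho S k}" L] card_less_rho[OF assms(1,5)] by simp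
    with \<open>k \<le> card L\<close> \<open>1 \<le> k\<close> show False by simp
  qed
next
  assume "rho S k \<in> L"
  then have "insert (rho S k) {p \<in> S. p < rho S k} \<subseteq> L"
    using assms(4) by auto
  then have "card (insert (rho S k) {p \<in> S. p < rho S k}) \<le> card L"
    using assms(2) by (rule card_mono[rotated])
  then show "k \<le> card L"
    using card_less_rho[OF assms(1,5)] assms(5) by simp
qed

lemma card_Aset_ge_even_iff:
  assumes "infinite S" "reflection_closed S" "1 \<le> k"
  shows "2 * k \<le> card (Aset S s) \<longleftrightarrow> 2 * rho S k < s \<and> s - rho S k \<in> S"
proof -
  have "2 * k \<le> card (Aset S s) \<longleftrightarrow> k \<le> card (Aset_lower S s)"
    using card_Aset[of S s] card_midpoint_le[of S s] by linarith
  also have "\<dots> \<longleftrightarrow> rho S k \<in> Aset_lower S s"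
    using assms Aset_lower_downward_closed
    by (intro card_ge_iff_rho_mem finite_Aset_lower) (auto simp: Aset_lower_def)
  also have "\<dots> \<longleftrightarrow> 2 * rho S k < s \<and> s - rho S k \<in> S"
    using rho_in[OF assms(1)] by (simp add: Aset_lower_def)
  finally show ?thesis .
qed

lemma odd_card_Aset_imp_double:
  assumes "odd (card (Aset S s))"
  obtains y where "y \<in> S" "s = 2 * y"
proof -
  have "{p \<in> S. 2 * p = s} \<noteq> {}"
  proof
    assume empty: "{p \<in> S. 2 * p = s} = {}"
    have "card (Aset S s) = 2 * card (Aset_lower S s)"
      using card_Aset[of S s] unfolding empty by simp
    with assms show False by simp
  qed
  then show ?thesis using that by blast
qed

lemma card_Aset_double_rho:
  assumes "infinite S" "reflection_closed S" "1 \<le> k"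
  shows "card (Aset S (2 * rho S k)) = 2 * k - 1"
  using card_Aset_double[OF rho_in] Aset_lower_double[OF assms(2) rho_in]
    card_less_rho[OF assms(1,3)] assms by simp

lemma card_Aset_ge_odd_iff:
  assumes "infinite S" "reflection_closed S" "1 \<le> k"
  shows "2 * k - 1 \<le> card (Aset S s) \<longleftrightarrow> 2 * rho S k \<le> s \<and> s - rho S k \<in> S"
proof
  assume ge: "2 * k - 1 \<le> card (Aset S s)"
  show "2 * rho S k \<le> s \<and> s - rho S k \<in> S"
  proof (cases "2 * k \<le> card (Aset S s)")
    case True
    then show ?thesis using card_Aset_ge_even_iff[OF assms] by simp
  next
    case False
    with ge have card: "card (Aset S s) = 2 * k - 1" by simp
    then have "odd (card (Aset S s))"
      using assms(3) by presburger
    then obtain y where "y \<in> S" "s = 2 * y"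
      by (rule odd_card_Aset_imp_double)
    moreover obtain j where "1 \<le> j" "rho S j = y"
      using rho_surj[OF assms(1) \<open>y \<in> S\<close>] by blast
    ultimately have "2 * j - 1 = 2 * k - 1"
      using card_Aset_double_rho[OF assms(1,2) \<open>1 \<le> j\<close>] card by simp
    then have "j = k"
      using \<open>1 \<le> j\<close> assms(3) by simp
    then have "y = rho S k"
      using \<open>rho S j = y\<close> by simp
    then show ?thesis using \<open>s = 2 * y\<close> \<open>y \<in> S\<close> by simp
  qed
next
  assume "2 * rho S k \<le> s \<and> s - rho S k \<in> S"
  then consider "2 * rho S k < s \<and> s - rho S k \<in> S" | "s = 2 * rho S k" by linarith
  then show "2 * k - 1 \<le> card (Aset S s)"
  proof cases
    case 1
    then show ?thesis using card_Aset_ge_even_iff[OF assms, of s] by simp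
  next
    case 2
    then show ?thesis using card_Aset_double_rho[OF assms] by simp
  qed
qed

lemma reflection_closed_card_Rset:
  assumes "numerical_semigroup S" "reflection_closed S" "1 \<le> d"
  shows "card (Rset S d) = rho S ((d + 1) div 2) + d div 2"
proof -
  have inf: "infinite S"
    using assms(1) by (rule numerical_semigroup_infinite)
  define k where "k = (d + 1) div 2"
  define c where "c = rho S k"
  define V where "V = {t \<in> S. c < t} \<union> (if even d then {} else {c})"
  have k: "1 \<le> k" using assms(3) by (simp add: k_def)
  have "c \<in> S" using inf by (simp add: c_def rho_in)
  have ge_iff: "d \<le> card (Aset S s) \<longleftrightarrow> s \<in> (+) c ` V" for s
  proof (cases "even d")
    case True
    then have "d = 2 * k" by (simp add: k_def)
    then show ?thesis
      using card_Aset_ge_even_iff[OF inf assms(2) k, of s] True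
      by (auto simp: mem_image_add_iff V_def c_def)
  next
    case False
    then have "d = 2 * k - 1" by (simp add: k_def)
    then show ?thesis
      using card_Aset_ge_odd_iff[OF inf assms(2) k, of s] False \<open>c \<in> S\<close>
      by (auto simp: mem_image_add_iff V_def c_def)
  qed
  have "V \<subseteq> S" "(+) c ` V \<subseteq> S"
    using \<open>c \<in> S\<close> numerical_semigroup_add[OF assms(1)] by (auto simp: V_def)
  then have "{s \<in> S. card (Aset S s) < d} = S - (+) c ` V"
    using ge_iff by (auto simp: not_le[symmetric])
  have "S - V = {t \<in> S. t < c} \<union> (if even d then {c} else {})"
    using \<open>c \<in> S\<close> by (auto simp: V_def)
  then have "card (S - V) = d div 2"
    using card_less_rho[OF inf k] k by (auto simp: c_def k_def)
  have "card (S - (+) c ` V) = c + card (S - V)"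
    using numerical_semigroup_finite_Compl[OF assms(1)] \<open>V \<subseteq> S\<close> \<open>(+) c ` V \<subseteq> S\<close>
      \<open>S - V = _\<close> by (intro card_diff_image_add) simp_all
  then show ?thesis
    using card_Rset[OF inf] \<open>{s \<in> S. card (Aset S s) < d} = _\<close> \<open>card (S - V) = _\<close>
    by (simp add: c_def k_def)
qed

lemma count_formula_imp_card_odd_level:
  assumes "infinite S"
    and "\<forall>d::nat. 1 \<le> d \<longrightarrow> card (Rset S d) = rho S ((d + 1) div 2) + d div 2"
  shows "card {s \<in> S. card (Aset S s) = 2 * m + 1} = 1" (is "card ?O = 1")
proof -
  let ?R = "\<lambda>d. {s \<in> S. card (Aset S s) < d}"
  have R1: "card (?R (2 * m + 1)) = rho S (m + 1) + m"
    using assms(2)[rule_format, of "2 * m + 1"] card_Rset[OF assms(1)] by simp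
  have R2: "card (?R (2 * m + 2)) = rho S (m + 1) + m + 1"
    using assms(2)[rule_format, of "2 * m + 2"] card_Rset[OF assms(1)] by simp
  then have "finite (?R (2 * m + 2))"
    by (intro card_ge_0_finite) simp
  moreover have "?R (2 * m + 2) = ?R (2 * m + 1) \<union> ?O"
    by auto
  ultimately have "card (?R (2 * m + 2)) = card (?R (2 * m + 1)) + card ?O"
    by (simp add: card_Un_disjoint disjoint_iff)
  then show ?thesis using R1 R2 by simp
qed

lemma count_formula_imp_Aset_lower_double:
  assumes "numerical_semigroup S"
    and "\<forall>d::nat. 1 \<le> d \<longrightarrow> card (Rset S d) = rho S ((d + 1) div 2) + d div 2"
    and "x \<in> S"
  shows "Aset_lower S (2 * x) = {p \<in> S. p < x}"
proof -
  have inf: "infinite S"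
    using assms(1) by (rule numerical_semigroup_infinite)
  define f where "f n = card (Aset_lower S (2 * rho S (Suc n)))" for n
  have below: "card {p \<in> S. p < rho S (Suc n)} = n" for n
    using card_less_rho[OF inf] by simp
  have "f n \<le> n" for n
  proof -
    have "f n \<le> card {p \<in> S. p < rho S (Suc n)}"
      unfolding f_def by (rule card_mono[OF _ Aset_lower_double_subset]) simp
    then show ?thesis using below by simp
  qed
  moreover have "inj f"
  proof (rule injI)
    fix n n' assume "f n = f n'"
    let ?O = "{s \<in> S. card (Aset S s) = 2 * f n + 1}"
    have double_in: "2 * rho S i \<in> S" for i
      using numerical_semigroup_add[OF assms(1) rho_in[OF inf] rho_in[OF inf]] by (simp add: mult_2)
    have "2 * rho S (Suc n) \<in> ?O" "2 * rho S (Suc n') \<in> ?O"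
      using card_Aset_double[OF rho_in[OF inf]] double_in \<open>f n = f n'\<close> by (simp_all add: f_def)
    moreover obtain a where "?O = {a}"
      using count_formula_imp_card_odd_level[OF inf assms(2)] by (rule card_1_singletonE)
    ultimately have "2 * rho S (Suc n) = 2 * rho S (Suc n')"
      by (metis singletonD)
    then show "n = n'"
      using rho_inject[OF inf] by simp
  qed
  ultimately have "f n = n" for n
    by (intro inj_le_self_imp_eq)
  obtain k where "1 \<le> k" "rho S k = x"
    using rho_surj[OF inf assms(3)] by blast
  then have "card (Aset_lower S (2 * x)) = card {p \<in> S. p < x}"
    using \<open>f (k - 1) = k - 1\<close> below[of "k - 1"] by (simp add: f_def)
  then show ?thesis
    by (intro card_subset_eq Aset_lower_double_subset) simp_all
qed

lemma count_formula_imp_reflection_closed: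
  assumes "numerical_semigroup S"
    and "\<forall>d::nat. 1 \<le> d \<longrightarrow> card (Rset S d) = rho S ((d + 1) div 2) + d div 2"
  shows "reflection_closed S"
  using assms by (intro reflection_closed_if_Aset_lower_double count_formula_imp_Aset_lower_double)

theorem mainTheorem2:
  fixes S :: "nat set"
  assumes "numerical_semigroup S"
  shows "arf S \<longleftrightarrow>
    (\<forall>d::nat. 1 \<le> d \<longrightarrow> card (Rset S d) = rho S ((d + 1) div 2) + d div 2)"
proof -
  have "arf S \<longleftrightarrow> reflection_closed S"
    using assms by (intro arf_iff_reflection_closed numerical_semigroup_infinite)
  then show ?thesis
    using reflection_closed_card_Rset[OF assms] count_formula_imp_reflection_closed[OF assms] by blast
qed

end
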